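(* Let $d\ge 2$, let $v\in\mathbb{R}^d$ be a unit vector, $P_F:=vv^\top$, $P_S:=I-vv^\top$, and $w_\star\in\mathbb{R}^d$. Suppose the loss is $L(w)=\ell\big(v^\top(w-w_\star)\big)+\tfrac12\|H^{1/2}P_S(w-w_\star)\|_2^2$, where $\ell:\mathbb{R}\to\mathbb{R}$ is $C^2$ and $H$ is a symmetric positive semidefinite $d\times d$ matrix with $HP_F=0$, $HP_S=P_SH=H$, whose eigenvalues on $\mathrm{range}(P_S)$, denoted $\lambda_1,\dots,\lambda_{d-1}$, lie in $[\mu,L_S]$ for some $0<\mu\le L_S$. Let $\eta\in(0,2/L_S)$, $\mu_F>0$, $\sigma>0$, and let the iterates satisfy $$w_{k+1}=w_k-\eta\nabla L(w_k)-\eta\mu_F v+\eta g_k,$$ where $(g_k)_{k\ge0}$ are i.i.d. with $g_k\sim\mathcal{N}(0,\sigma^2P_S)$. Let $T\ge1$, $N\ge1$, $k_0\ge0$, and assume the mountain coordinates $z_k:=P_S(w_k-w_\star)$ form a stationary process for $k\ge k_0$. Define checkpoints $w^{(m)}:=w_{k_0+mT}$, the merged checkpoint $\bar w:=\frac1N\sum_{m=0}^{N-1}w^{(m)}$, and the river deviation $D(w):=\|P_S(w-w_\star)\|_2$. Then $$\mathbb{E}\,D(\bar w)^2=\sum_{j=1}^{d-1}\left(\frac{\eta\sigma^2}{2\lambda_j-\eta\lambda_j^2}\right)\cdot\frac{1}{N^2}\left[N+2\sum_{r=1}^{N-1}(N-r)(1-\eta\lambda_j)^{rT}\right].$$ In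 particular, if $\varepsilon\in[0,1)$ satisfies $|1-\eta\lambda_j|^T\le\varepsilon$ for all $j$, then $$\mathbb{E}\,D(\bar w)^2\le\frac1N\left(1+\frac{2\varepsilon}{1-\varepsilon}\right)\sum_{j=1}^{d-1}\frac{\eta\sigma^2}{2\lambda_j-\eta\lambda_j^2}.$$
   Context: This models late-stage SGD in a "river-valley" landscape: $v$ is the (constant) flat "river" direction, the river is the line $\{w_\star+\alpha v:\alpha\in\mathbb{R}\}$, and $\mathrm{range}(P_S)$ is the high-curvature "mountain" subspace. Stationarity after the burn-in time $k_0$ means the law of $(z_{k_0+k})_{k\ge0}$ is shift-invariant (e.g., $z_{k_0}$ is drawn from the stationary distribution of the mountain recursion, independently of $g_k$, $k\ge k_0$). *)

theory Defs
  imports "HOL-Analysis.Analysis" "HOL-Probability.Probability"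
begin

definition projF :: "real^'n \<Rightarrow> real^'n^'n" where
  "projF v = (\<chi> i j. v $ i * v $ j)"

definition projS :: "real^'n \<Rightarrow> real^'n^'n" where
  "projS v = mat 1 - projF v"

definition psd :: "real^'n^'n \<Rightarrow> bool" where
  "psd A \<longleftrightarrow> transpose A = A \<and> (\<forall>x. 0 \<le> x \<bullet> (A *v x))"

definition msqrt :: "real^'n^'n \<Rightarrow> real^'n^'n" where
  "msqrt A = (THE S. psd S \<and> S ** S = A)"

definition river_loss ::
  "(real \<Rightarrow> real) \<Rightarrow> real^'n \<Rightarrow> real^'n \<Rightarrow> real^'n^'n \<Rightarrow> real^'n \<Rightarrow> real" where
  "river_loss l v wstar H w =
     l (v \<bullet> (w - wstar)) + (1/2) * (norm (msqrt H *v (projS v *v (w - wstar))))\<^sup>2"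

text \<open>Centred Gaussian random vector with covariance matrix C (possibly degenerate),
  defined via its one-dimensional projections (Cramer--Wold): every projection a^T X
  is N(0, a^T C a), where N(0,0) is the Dirac measure at 0.\<close>
definition centred_gaussian_vector ::
  "'a measure \<Rightarrow> ('a \<Rightarrow> real^'n) \<Rightarrow> real^'n^'n \<Rightarrow> bool" where
  "centred_gaussian_vector M X C \<longleftrightarrow>
     X \<in> borel_measurable M \<and>
     (\<forall>a. (if a \<bullet> (C *v a) = 0
           then distr M borel (\<lambda>\<omega>. a \<bullet> X \<omega>) = return borel 0
           else distributed M lborel (\<lambda>\<omega>. a \<bullet> X \<omega>)
                  (\<lambda>x. ennreal (normal_density 0 (sqrt (a \<bullet> (C *v a))) x))))"

definition stationary_from ::
  "'a measure \<Rightarrow> (nat \<Rightarrow> 'a \<Rightarrow> real^'n) \<Rightarrow> nat \<Rightarrow> bool" where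
  "stationary_from M z k0 \<longleftrightarrow>
     (\<forall>s. distr M (Pi\<^sub>M UNIV (\<lambda>_. borel)) (\<lambda>\<omega> i. z (k0 + s + i) \<omega>)
        = distr M (Pi\<^sub>M UNIV (\<lambda>_. borel)) (\<lambda>\<omega> i. z (k0 + i) \<omega>))"

end

theory Submission
  imports Defs
begin

(* Along each eigenvector u_j of H in the mountain subspace the river terms l'(v.(w - w_star)) v
   and mu_F v vanish, so y_k = u_j.(w_k - w_star) is a scalar AR(1) process
   y_(k+1) = (1 - eta lambda_j) y_k + eta u_j.g_k with independent N(0, eta^2 sigma^2) innovations.
   For a stationary AR(1) process E y_k^2 = eta^2 sigma^2 / (1 - (1 - eta lambda_j)^2), which is
   finite because stationarity transports truncated second moments to late times, where the
   initial value has been damped away; moreover E y_p y_q = (1 - eta lambda_j)^(q-p) E y_p^2.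
   Parseval in the eigenbasis splits D(wbar)^2 into these coordinates, and averaging N checkpoints
   T steps apart produces the Toeplitz sum N + 2 sum_r (N - r) (1 - eta lambda_j)^(rT), which a
   geometric series bounds by N (1 + 2 eps / (1 - eps)). *)

lemma projF_apply: "projF v *v x = (v \<bullet> x) *\<^sub>R v"
  by (simp add: projF_def matrix_vector_mult_def vec_eq_iff inner_vec_def
      sum_distrib_left mult.commute mult.left_commute)

lemma projS_apply: "projS v *v x = x - (v \<bullet> x) *\<^sub>R v"
  by (simp add: projS_def matrix_vector_mult_diff_rdistrib projF_apply)

lemma matrix_vector_mult_sum: "A *v sum f S = (\<Sum>x\<in>S. A *v f x)"
  by (induct S rule: infinite_finite_induct) (simp_all add: matrix_vector_right_distrib)

lemma orthonormal_basis_expansion: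
  fixes e :: "'i \<Rightarrow> 'a::euclidean_space"
  assumes I: "finite I" "card I = DIM('a)"
    and orthonormal: "\<And>i j. i \<in> I \<Longrightarrow> j \<in> I \<Longrightarrow> e i \<bullet> e j = (if i = j then 1 else 0)"
  shows "(\<Sum>i\<in>I. (e i \<bullet> x) *\<^sub>R e i) = x"
proof -
  have inj: "inj_on e I"
    by (rule inj_onI) (metis orthonormal zero_neq_one)
  have "independent (e ` I)"
    by (rule pairwise_orthogonal_independent)
      (auto simp: pairwise_def orthogonal_def orthonormal, metis orthonormal zero_neq_one inner_zero_left)
  then have "UNIV \<subseteq> span (e ` I)"
    by (intro card_ge_dim_independent) (simp_all add: card_image[OF inj] I)
  then have span: "x \<in> span (e ` I)" for x
    by blast
  define y where "y = x - (\<Sum>i\<in>I. (e i \<bullet> x) *\<^sub>R e i)"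
  have "orthogonal y (e j)" if "j \<in> I" for j
  proof -
    have "(\<Sum>i\<in>I. (e i \<bullet> x) * (e i \<bullet> e j)) = x \<bullet> e j"
      using that I(1) by (simp add: orthonormal if_distrib inner_commute cong: if_cong)
    then show ?thesis
      by (simp add: y_def orthogonal_def inner_diff_left inner_sum_left)
  qed
  then have "orthogonal y y"
    using orthogonal_to_span[OF span] by blast
  then show ?thesis by (simp add: y_def orthogonal_self)
qed

lemma orthonormal_basis_parseval:
  fixes e :: "'i \<Rightarrow> 'a::euclidean_space"
  assumes "finite I" "card I = DIM('a)"
    and "\<And>i j. i \<in> I \<Longrightarrow> j \<in> I \<Longrightarrow> e i \<bullet> e j = (if i = j then 1 else 0)"
  shows "(norm x)\<^sup>2 = (\<Sum>i\<in>I. (e i \<bullet> x)\<^sup>2)"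
proof -
  have "(norm x)\<^sup>2 = x \<bullet> (\<Sum>i\<in>I. (e i \<bullet> x) *\<^sub>R e i)"
    by (simp add: orthonormal_basis_expansion[OF assms] power2_norm_eq_inner)
  then show ?thesis
    by (simp add: inner_sum_right power2_eq_square inner_commute)
qed

lemma matrix_eq_on_orthonormal_basis:
  fixes A B :: "real^'n^'m" and e :: "'i \<Rightarrow> real^'n"
  assumes "finite I" "card I = CARD('n)"
    and "\<And>i j. i \<in> I \<Longrightarrow> j \<in> I \<Longrightarrow> e i \<bullet> e j = (if i = j then 1 else 0)"
    and agree: "\<And>i. i \<in> I \<Longrightarrow> A *v e i = B *v e i"
  shows "A = B"
proof (rule iffD2[OF matrix_eq], rule allI)
  fix x :: "real^'n"
  have "A *v x = A *v (\<Sum>i\<in>I. (e i \<bullet> x) *\<^sub>R e i)" "B *v x = B *v (\<Sum>i\<in>I. (e i \<bullet> x) *\<^sub>R e i)"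
    using orthonormal_basis_expansion[OF assms(1) _ assms(3)] assms(2) by simp_all
  then show "A *v x = B *v x"
    by (simp add: matrix_vector_mult_sum matrix_vector_mult_scaleR agree)
qed

lemma inner_matrix_vector_transpose: "(A *v x) \<bullet> y = x \<bullet> (transpose A *v (y::real^'n))"
  by (metis dot_lmul_matrix inner_commute transpose_matrix_vector transpose_transpose)

(* With r = (S - sqrt lam) x one has (S + sqrt lam) r = 0, and positivity of S forces r = 0. *)
lemma psd_sqrt_eigenvector:
  fixes S H :: "real^'n^'n"
  assumes S: "psd S" "S ** S = H" and eigen: "H *v x = lam *\<^sub>R x" and lam: "0 \<le> lam"
  shows "S *v x = sqrt lam *\<^sub>R x"
proof -
  define c where "c = sqrt lam"
  define r where "r = S *v x - c *\<^sub>R x"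
  have S_sym: "transpose S = S" using S(1) by (simp add: psd_def)
  have "S *v r = (c * c) *\<^sub>R x - c *\<^sub>R (S *v x)"
    using lam by (simp add: r_def c_def matrix_vector_mul_assoc S(2) eigen matrix_vector_mult_diff_distrib
        matrix_vector_mult_scaleR)
  then have Sr: "S *v r = - c *\<^sub>R r"
    by (simp add: r_def algebra_simps)
  have "0 \<le> r \<bullet> (S *v r)" using S(1) by (simp add: psd_def)
  then have c_rr: "c * (r \<bullet> r) \<le> 0" by (simp add: Sr)
  have rr: "r \<bullet> r = - 2 * c * (x \<bullet> r)"
  proof -
    have "r \<bullet> r = x \<bullet> (S *v r) - c * (x \<bullet> r)"
      by (simp add: r_def inner_diff_left inner_matrix_vector_transpose S_sym)
    then show ?thesis by (simp add: Sr)
  qed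
  have "r \<bullet> r = 0"
  proof (cases "c = 0")
    case True
    then show ?thesis using rr by simp
  next
    case False
    then have "0 < c" using lam by (simp add: c_def)
    then show ?thesis using c_rr inner_ge_zero[of r] by (simp add: mult_le_0_iff)
  qed
  then show ?thesis by (simp add: r_def c_def)
qed

lemma psd_sqrt_exists_orthonormal_eigenbasis:
  fixes H :: "real^'n^'n" and e :: "'i \<Rightarrow> real^'n"
  assumes I: "finite I" "card I = CARD('n)"
    and orthonormal: "\<And>i j. i \<in> I \<Longrightarrow> j \<in> I \<Longrightarrow> e i \<bullet> e j = (if i = j then 1 else 0)"
    and eigen: "\<And>i. i \<in> I \<Longrightarrow> H *v e i = lam i *\<^sub>R e i"
    and nonneg: "\<And>i. i \<in> I \<Longrightarrow> 0 \<le> lam i"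
  shows "\<exists>S. psd S \<and> S ** S = H"
proof -
  define S :: "real^'n^'n" where "S = (\<chi> a b. \<Sum>i\<in>I. sqrt (lam i) * e i $ a * e i $ b)"
  have S_apply: "S *v x = (\<Sum>i\<in>I. (sqrt (lam i) * (e i \<bullet> x)) *\<^sub>R e i)" for x
    by (simp add: S_def matrix_vector_mult_def vec_eq_iff inner_vec_def sum_distrib_left
        sum_distrib_right sum_component mult.commute mult.left_commute sum.swap[of _ I])
  have "transpose S = S"
    by (simp add: S_def transpose_def vec_eq_iff mult.commute mult.left_commute)
  moreover have "x \<bullet> (S *v x) = (\<Sum>i\<in>I. sqrt (lam i) * (e i \<bullet> x)\<^sup>2)" for x
    by (simp add: S_apply inner_sum_right power2_eq_square inner_commute mult.assoc)
  then have "0 \<le> x \<bullet> (S *v x)" for x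
    using nonneg by (simp add: sum_nonneg)
  moreover have "S ** S = H"
  proof (rule matrix_eq_on_orthonormal_basis[OF I orthonormal])
    fix j assume j: "j \<in> I"
    have "S *v e j = (\<Sum>i\<in>I. if i = j then sqrt (lam j) *\<^sub>R e j else 0)"
      unfolding S_apply by (rule sum.cong) (auto simp: orthonormal j)
    then have "S *v e j = sqrt (lam j) *\<^sub>R e j"
      using j I(1) by simp
    then show "(S ** S) *v e j = H *v e j"
      using j nonneg[of j] by (simp add: matrix_vector_mul_assoc[symmetric] eigen matrix_vector_mult_scaleR)
  qed
  ultimately show ?thesis
    by (auto simp: psd_def)
qed

lemma psd_sqrt_unique_orthonormal_eigenbasis:
  fixes H :: "real^'n^'n" and e :: "'i \<Rightarrow> real^'n"
  assumes I: "finite I" "card I = CARD('n)"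
    and orthonormal: "\<And>i j. i \<in> I \<Longrightarrow> j \<in> I \<Longrightarrow> e i \<bullet> e j = (if i = j then 1 else 0)"
    and eigen: "\<And>i. i \<in> I \<Longrightarrow> H *v e i = lam i *\<^sub>R e i"
    and nonneg: "\<And>i. i \<in> I \<Longrightarrow> 0 \<le> lam i"
    and S: "psd S" "S ** S = H" and S': "psd S'" "S' ** S' = H"
  shows "S = S'"
proof (rule matrix_eq_on_orthonormal_basis[OF I orthonormal])
  fix i assume "i \<in> I"
  then show "S *v e i = S' *v e i"
    by (simp add: psd_sqrt_eigenvector[OF S eigen nonneg] psd_sqrt_eigenvector[OF S' eigen nonneg])
qed

lemma msqrt_orthonormal_eigenbasis:
  fixes H :: "real^'n^'n" and e :: "'i \<Rightarrow> real^'n"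
  assumes "finite I" "card I = CARD('n)"
    and "\<And>i j. i \<in> I \<Longrightarrow> j \<in> I \<Longrightarrow> e i \<bullet> e j = (if i = j then 1 else 0)"
    and "\<And>i. i \<in> I \<Longrightarrow> H *v e i = lam i *\<^sub>R e i"
    and "\<And>i. i \<in> I \<Longrightarrow> 0 \<le> lam i"
  shows "psd (msqrt H)" "msqrt H ** msqrt H = H"
proof -
  obtain S where S: "psd S" "S ** S = H"
    using psd_sqrt_exists_orthonormal_eigenbasis[OF assms] by blast
  have "msqrt H = S"
    unfolding msqrt_def using S psd_sqrt_unique_orthonormal_eigenbasis[OF assms] by blast
  then show "psd (msqrt H)" "msqrt H ** msqrt H = H"
    using S by simp_all
qed

lemma river_loss_gradient_eigenvector:
  fixes H :: "real^'n^'n"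
  assumes grad: "(river_loss l v wstar H has_derivative (\<lambda>h. gradL x \<bullet> h)) (at x)"
    and sqrt: "psd (msqrt H)" "msqrt H ** msqrt H = H"
    and orth: "u \<bullet> v = 0" and eigen: "H *v u = lam *\<^sub>R u"
  shows "gradL x \<bullet> u = lam * (u \<bullet> (x - wstar))"
proof -
  define y where "y = projS v *v (x - wstar)"
  have H_sym: "transpose H = H"
    using sqrt by (metis matrix_transpose_mul psd_def)
  have quadratic: "(norm (msqrt H *v z))\<^sup>2 = z \<bullet> (H *v z)" for z
    using sqrt by (simp add: power2_norm_eq_inner inner_matrix_vector_transpose psd_def
        matrix_vector_mul_assoc)
  have along_u: "river_loss l v wstar H (x + t *\<^sub>R u) =
      l (v \<bullet> (x - wstar)) + 1/2 * (y \<bullet> (H *v y) + 2 * t * (lam * (u \<bullet> y)) + t\<^sup>2 * (lam * (u \<bullet> u)))"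
    for t
  proof -
    have "projS v *v (x + t *\<^sub>R u - wstar) = y + t *\<^sub>R u"
      using orth by (simp add: y_def projS_apply algebra_simps inner_commute)
    moreover have "v \<bullet> (x + t *\<^sub>R u - wstar) = v \<bullet> (x - wstar)"
      using orth by (simp add: algebra_simps inner_commute)
    ultimately have "river_loss l v wstar H (x + t *\<^sub>R u) =
        l (v \<bullet> (x - wstar)) + 1/2 * ((y + t *\<^sub>R u) \<bullet> (H *v (y + t *\<^sub>R u)))"
      by (simp only: river_loss_def quadratic)
    moreover have "u \<bullet> (H *v y) = lam * (u \<bullet> y)"
      by (metis H_sym eigen inner_commute inner_matrix_vector_transpose inner_scaleR_right)
    ultimately show ?thesis
      by (simp add: matrix_vector_right_distrib matrix_vector_mult_scaleR eigen inner_add_left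
          inner_add_right inner_commute power2_eq_square algebra_simps)
  qed
  have "((\<lambda>t. river_loss l v wstar H (x + t *\<^sub>R u)) has_real_derivative gradL x \<bullet> u) (at 0)"
  proof -
    have "((\<lambda>t::real. x + t *\<^sub>R u) has_derivative (\<lambda>t. t *\<^sub>R u)) (at 0)"
      by (auto intro!: derivative_eq_intros)
    moreover have "(river_loss l v wstar H has_derivative (\<lambda>h. gradL x \<bullet> h)) (at (x + 0 *\<^sub>R u))"
      using grad by simp
    ultimately have "(river_loss l v wstar H \<circ> (\<lambda>t. x + t *\<^sub>R u) has_derivative
        (\<lambda>h. gradL x \<bullet> h) \<circ> (\<lambda>t. t *\<^sub>R u)) (at 0)"
      by (rule diff_chain_at)
    moreover have "(\<lambda>h. gradL x \<bullet> h) \<circ> (\<lambda>t. t *\<^sub>R u) = (\<lambda>t. (gradL x \<bullet> u) * t)"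
      by (auto simp: fun_eq_iff)
    ultimately show ?thesis
      by (simp add: has_field_derivative_def comp_def)
  qed
  moreover have "((\<lambda>t. river_loss l v wstar H (x + t *\<^sub>R u)) has_real_derivative lam * (u \<bullet> y)) (at 0)"
    unfolding along_u by (auto intro!: derivative_eq_intros)
  ultimately have "gradL x \<bullet> u = lam * (u \<bullet> y)"
    by (rule DERIV_unique)
  also have "u \<bullet> y = u \<bullet> (x - wstar)"
    using orth by (simp add: y_def projS_apply inner_diff_right inner_commute)
  finally show ?thesis .
qed

locale river_frame =
  fixes v :: "real^'n" and u :: "nat \<Rightarrow> real^'n"
  assumes unit: "norm v = 1"
    and orthonormal: "\<And>i j. i \<in> {1..CARD('n)-1} \<Longrightarrow> j \<in> {1..CARD('n)-1} \<Longrightarrow>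
           u i \<bullet> u j = (if i = j then 1 else 0)"
    and orthogonal: "\<And>j. j \<in> {1..CARD('n)-1} \<Longrightarrow> u j \<bullet> v = 0"
begin

definition frame :: "nat \<Rightarrow> real^'n" where
  "frame i = (if i = 0 then v else u i)"

lemma frame_orthonormal:
  "i \<in> {..<CARD('n)} \<Longrightarrow> j \<in> {..<CARD('n)} \<Longrightarrow> frame i \<bullet> frame j = (if i = j then 1 else 0)"
  using unit orthonormal[of i j] orthogonal[of i] orthogonal[of j]
  by (auto simp: frame_def inner_commute norm_eq_1)

lemma lessThan_CARD_eq: "{..<CARD('n)} = insert 0 {1..CARD('n)-1}"
  by auto

lemma norm_projS_squared: "(norm (projS v *v x))\<^sup>2 = (\<Sum>j = 1..CARD('n)-1. (u j \<bullet> x)\<^sup>2)"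
proof -
  have "(norm (projS v *v x))\<^sup>2 = (\<Sum>i<CARD('n). (frame i \<bullet> (projS v *v x))\<^sup>2)"
    by (rule orthonormal_basis_parseval) (simp_all add: frame_orthonormal)
  also have "\<dots> = (\<Sum>j = 1..CARD('n)-1. (u j \<bullet> x)\<^sup>2)"
    using unit orthogonal
    by (simp add: lessThan_CARD_eq frame_def projS_apply inner_diff_right norm_eq_1 inner_commute)
  finally show ?thesis .
qed

lemma msqrt_props:
  assumes "H *v v = 0"
    and "\<And>j. j \<in> {1..CARD('n)-1} \<Longrightarrow> H *v u j = lam j *\<^sub>R u j"
    and "\<And>j. j \<in> {1..CARD('n)-1} \<Longrightarrow> 0 \<le> lam j"
  shows "psd (msqrt H)" "msqrt H ** msqrt H = H"
proof -
  have "H *v frame i = (if i = 0 then 0 else lam i) *\<^sub>R frame i" "0 \<le> (if i = 0 then 0 else lam i)"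
    if "i \<in> {..<CARD('n)}" for i
    using that assms by (auto simp: lessThan_CARD_eq frame_def)
  then show "psd (msqrt H)" "msqrt H ** msqrt H = H"
    using msqrt_orthonormal_eigenbasis[where I="{..<CARD('n)}" and e=frame and H=H
        and lam="\<lambda>i. if i = 0 then 0 else lam i"] frame_orthonormal
    by simp_all
qed

lemma norm_projS_average:
  assumes "N \<noteq> 0"
  shows "(norm (projS v *v ((1 / real N) *\<^sub>R (\<Sum>m<N. x m) - wstar)))\<^sup>2 =
    (\<Sum>j = 1..CARD('n)-1. ((1 / real N) * (\<Sum>m<N. u j \<bullet> (x m - wstar)))\<^sup>2)"
  using assms by (simp add: norm_projS_squared inner_diff_right inner_sum_right sum_subtractf
      field_simps)

end

lemma double_sum_power_dist:
  fixes c :: real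
  shows "(\<Sum>m<N. \<Sum>m'<N. c ^ (max m m' - min m m')) =
    real N + 2 * (\<Sum>r = 1..N-1. real (N - r) * c ^ r)"
proof (induction N)
  case 0
  show ?case by simp
next
  case (Suc N)
  have reflect: "(\<Sum>m<N. c ^ (N - m)) = (\<Sum>r = 1..N. c ^ r)"
    by (rule sum.reindex_bij_witness[of _ "\<lambda>r. N - r" "\<lambda>m. N - m"]) auto
  have "(\<Sum>m<Suc N. \<Sum>m'<Suc N. c ^ (max m m' - min m m')) =
      (\<Sum>m<N. \<Sum>m'<N. c ^ (max m m' - min m m')) + 2 * (\<Sum>m<N. c ^ (N - m)) + 1"
    by (simp add: sum.distrib max_def min_def)
  moreover have "(\<Sum>r = 1..N. real (Suc N - r) * c ^ r) =
      (\<Sum>r = 1..N-1. real (N - r) * c ^ r) + (\<Sum>r = 1..N. c ^ r)"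
  proof -
    have "(\<Sum>r = 1..N. real (Suc N - r) * c ^ r) = (\<Sum>r = 1..N. real (N - r) * c ^ r + c ^ r)"
      by (rule sum.cong) (auto simp: Suc_diff_le algebra_simps)
    also have "(\<Sum>r = 1..N. real (N - r) * c ^ r) = (\<Sum>r = 1..N-1. real (N - r) * c ^ r)"
      by (cases N) (simp_all add: sum.cl_ivl_Suc)
    ultimately show ?thesis
      by (simp add: sum.distrib)
  qed
  ultimately show ?case
    by (simp add: Suc.IH reflect)
qed

lemma sum_powers_le_geometric:
  fixes e :: real
  assumes "0 \<le> e" "e < 1"
  shows "(\<Sum>r = 1..M. e ^ r) \<le> e / (1 - e)"
proof -
  have "(1 - e) * (\<Sum>r = 1..M. e ^ r) \<le> e"
    using assms sum_gp_multiplied[of 1 M e] by (cases M) simp_all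
  then show ?thesis
    using assms by (simp add: field_simps)
qed

lemma weighted_power_sum_le:
  fixes c \<epsilon> :: real
  assumes \<epsilon>: "0 \<le> \<epsilon>" "\<epsilon> < 1" and c: "\<bar>c\<bar> ^ T \<le> \<epsilon>"
  shows "(\<Sum>r = 1..N-1. real (N - r) * c ^ (r * T)) \<le> real N * (\<epsilon> / (1 - \<epsilon>))"
proof -
  have "real (N - r) * c ^ (r * T) \<le> real N * \<epsilon> ^ r" for r
  proof -
    have "c ^ (r * T) \<le> (\<bar>c\<bar> ^ T) ^ r"
      by (metis abs_ge_self mult.commute power_abs power_mult)
    also have "\<dots> \<le> \<epsilon> ^ r"
      using c by (intro power_mono) simp_all
    finally have "real (N - r) * c ^ (r * T) \<le> real (N - r) * \<epsilon> ^ r"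
      by (intro mult_left_mono) simp_all
    also have "\<dots> \<le> real N * \<epsilon> ^ r"
      using \<epsilon> by (intro mult_right_mono) simp_all
    finally show ?thesis .
  qed
  then have "(\<Sum>r = 1..N-1. real (N - r) * c ^ (r * T)) \<le> real N * (\<Sum>r = 1..N-1. \<epsilon> ^ r)"
    by (simp add: sum_distrib_left sum_mono)
  also have "\<dots> \<le> real N * (\<epsilon> / (1 - \<epsilon>))"
    using \<epsilon> by (intro mult_left_mono sum_powers_le_geometric) simp_all
  finally show ?thesis .
qed

lemma merged_variance_le:
  fixes V c :: "'j \<Rightarrow> real" and \<epsilon> :: real
  assumes V: "\<And>j. j \<in> J \<Longrightarrow> 0 \<le> V j" and \<epsilon>: "0 \<le> \<epsilon>" "\<epsilon> < 1"
    and c: "\<And>j. j \<in> J \<Longrightarrow> \<bar>c j\<bar> ^ T \<le> \<epsilon>" and N: "N \<ge> 1"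
  shows "(\<Sum>j\<in>J. V j * (1 / (real N)\<^sup>2) * (real N + 2 * (\<Sum>r = 1..N-1. real (N - r) * c j ^ (r * T))))
    \<le> (1 / real N) * (1 + 2 * \<epsilon> / (1 - \<epsilon>)) * (\<Sum>j\<in>J. V j)"
proof -
  have "V j * (1 / (real N)\<^sup>2) * (real N + 2 * (\<Sum>r = 1..N-1. real (N - r) * c j ^ (r * T)))
      \<le> V j * (1 / (real N)\<^sup>2) * (real N + 2 * (real N * (\<epsilon> / (1 - \<epsilon>))))" if "j \<in> J" for j
    using weighted_power_sum_le[OF \<epsilon> c[OF that], of N] V[OF that] by (intro mult_left_mono) simp_all
  also have "V j * (1 / (real N)\<^sup>2) * (real N + 2 * (real N * (\<epsilon> / (1 - \<epsilon>)))) =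
      (1 / real N) * (1 + 2 * \<epsilon> / (1 - \<epsilon>)) * V j" for j
    using N by (simp add: power2_eq_square field_simps)
  finally show ?thesis
    by (simp add: sum_distrib_left sum_mono)
qed

lemma (in prob_space) normal_distributed_moments:
  fixes Z :: "'a \<Rightarrow> real"
  assumes \<sigma>: "0 < \<sigma>" and Z: "distributed M lborel Z (normal_density 0 \<sigma>)"
  shows "integrable M (\<lambda>x. (Z x)\<^sup>2)" "expectation Z = 0" "expectation (\<lambda>x. (Z x)\<^sup>2) = \<sigma>\<^sup>2"
proof -
  have "integrable lborel (\<lambda>x. normal_density 0 \<sigma> x * x\<^sup>2)"
    using integrable_normal_moment[of \<sigma> 0 2] \<sigma> by simp
  then show sq: "integrable M (\<lambda>x. (Z x)\<^sup>2)"
    by (subst distributed_integrable[OF Z, symmetric]) (auto simp: normal_density_nonneg)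
  show mean: "expectation Z = 0"
    by (rule normal_distributed_expectation[OF \<sigma> Z])
  have "integrable M Z"
    using distributed_integrable_var[OF Z _ integrable_normal_moment_nz_1[OF \<sigma>]]
    by (simp add: normal_density_nonneg)
  then show "expectation (\<lambda>x. (Z x)\<^sup>2) = \<sigma>\<^sup>2"
    using variance_eq[OF _ sq] normal_distributed_variance[OF \<sigma> Z] mean by simp
qed

lemma integrable_mult_of_square_integrable:
  fixes f g :: "'a \<Rightarrow> real"
  assumes "f \<in> borel_measurable M" "g \<in> borel_measurable M"
    and "integrable M (\<lambda>x. (f x)\<^sup>2)" "integrable M (\<lambda>x. (g x)\<^sup>2)"
  shows "integrable M (\<lambda>x. f x * g x)"
proof (rule Bochner_Integration.integrable_bound)
  show "integrable M (\<lambda>x. (f x)\<^sup>2 + (g x)\<^sup>2)" using assms by simp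
  have "\<bar>f x * g x\<bar> \<le> (f x)\<^sup>2 + (g x)\<^sup>2" for x
  proof -
    have "2 * \<bar>f x\<bar> * \<bar>g x\<bar> \<le> (f x)\<^sup>2 + (g x)\<^sup>2"
      using sum_squares_bound[of "\<bar>f x\<bar>" "\<bar>g x\<bar>"] by simp
    moreover have "0 \<le> \<bar>f x\<bar> * \<bar>g x\<bar>" by simp
    ultimately show ?thesis unfolding abs_mult by linarith
  qed
  then show "AE x in M. norm (f x * g x) \<le> norm ((f x)\<^sup>2 + (g x)\<^sup>2)" by simp
qed (use assms in auto)

lemma integrable_square_add:
  fixes f g :: "'a \<Rightarrow> real"
  assumes "f \<in> borel_measurable M" "g \<in> borel_measurable M"
    and "integrable M (\<lambda>x. (f x)\<^sup>2)" "integrable M (\<lambda>x. (g x)\<^sup>2)"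
  shows "integrable M (\<lambda>x. (c * f x + g x)\<^sup>2)"
proof -
  have "integrable M (\<lambda>x. c\<^sup>2 * (f x)\<^sup>2 + (g x)\<^sup>2 + (2 * c) * (f x * g x))"
    using integrable_mult_of_square_integrable[OF assms] assms by simp
  then show ?thesis by (simp add: power2_sum power_mult_distrib algebra_simps)
qed

lemma (in prob_space) indep_vars_expectation_restrict_mult:
  fixes X :: "'i \<Rightarrow> 'a \<Rightarrow> real"
  assumes indep: "indep_vars (\<lambda>_. borel) X UNIV" and "j \<notin> S"
    and F: "F \<in> borel_measurable (Pi\<^sub>M S (\<lambda>_. borel))"
    and "integrable M (\<lambda>\<omega>. F (\<lambda>i\<in>S. X i \<omega>))" "integrable M (X j)"
  shows "expectation (\<lambda>\<omega>. F (\<lambda>i\<in>S. X i \<omega>) * X j \<omega>) =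
    expectation (\<lambda>\<omega>. F (\<lambda>i\<in>S. X i \<omega>)) * expectation (X j)"
proof -
  have "indep_var (Pi\<^sub>M S (\<lambda>_. borel)) (\<lambda>\<omega>. \<lambda>i\<in>S. X i \<omega>) (Pi\<^sub>M {j} (\<lambda>_. borel)) (\<lambda>\<omega>. \<lambda>i\<in>{j}. X i \<omega>)"
    using \<open>j \<notin> S\<close> by (intro indep_var_restrict[OF indep]) auto
  then have "indep_var borel (F \<circ> (\<lambda>\<omega>. \<lambda>i\<in>S. X i \<omega>)) borel ((\<lambda>t. t j) \<circ> (\<lambda>\<omega>. \<lambda>i\<in>{j}. X i \<omega>))"
    by (rule indep_var_compose) (use F in measurable)
  then have "indep_var borel (\<lambda>\<omega>. F (\<lambda>i\<in>S. X i \<omega>)) borel (X j)"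
    by (simp add: comp_def)
  then show ?thesis
    by (rule indep_var_lebesgue_integral) fact+
qed

lemma (in prob_space) expectation_average_square:
  fixes Z :: "nat \<Rightarrow> 'a \<Rightarrow> real"
  assumes integrable: "\<And>m m'. integrable M (\<lambda>\<omega>. Z m \<omega> * Z m' \<omega>)"
    and covariance: "\<And>m m'. m \<le> m' \<Longrightarrow> expectation (\<lambda>\<omega>. Z m \<omega> * Z m' \<omega>) = V * c ^ (m' - m)"
  shows "integrable M (\<lambda>\<omega>. ((1 / real N) * (\<Sum>m<N. Z m \<omega>))\<^sup>2)"
    and "expectation (\<lambda>\<omega>. ((1 / real N) * (\<Sum>m<N. Z m \<omega>))\<^sup>2) =
      V * (1 / (real N)\<^sup>2) * (real N + 2 * (\<Sum>r = 1..N-1. real (N - r) * c ^ r))"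
proof -
  have square: "((1 / real N) * (\<Sum>m<N. Z m \<omega>))\<^sup>2 =
      (1 / real N)\<^sup>2 * (\<Sum>m<N. \<Sum>m'<N. Z m \<omega> * Z m' \<omega>)" for \<omega>
    by (simp add: power_mult_distrib power2_eq_square sum_product)
  show "integrable M (\<lambda>\<omega>. ((1 / real N) * (\<Sum>m<N. Z m \<omega>))\<^sup>2)"
    unfolding square using integrable by simp
  have symmetric: "expectation (\<lambda>\<omega>. Z m \<omega> * Z m' \<omega>) = V * c ^ (max m m' - min m m')" for m m'
    using covariance[of m m'] covariance[of m' m] by (cases "m \<le> m'") (simp_all add: mult.commute)
  have "expectation (\<lambda>\<omega>. ((1 / real N) * (\<Sum>m<N. Z m \<omega>))\<^sup>2) =
      (1 / real N)\<^sup>2 * (\<Sum>m<N. \<Sum>m'<N. expectation (\<lambda>\<omega>. Z m \<omega> * Z m' \<omega>))"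
    unfolding square using integrable by simp
  also have "\<dots> = V * (1 / (real N)\<^sup>2) * (\<Sum>m<N. \<Sum>m'<N. c ^ (max m m' - min m m'))"
    by (simp add: symmetric sum_distrib_left power_one_over)
  finally show "expectation (\<lambda>\<omega>. ((1 / real N) * (\<Sum>m<N. Z m \<omega>))\<^sup>2) =
      V * (1 / (real N)\<^sup>2) * (real N + 2 * (\<Sum>r = 1..N-1. real (N - r) * c ^ r))"
    by (simp add: double_sum_power_dist)
qed

lemma stationary_from_distr_eq:
  fixes z :: "nat \<Rightarrow> 'a \<Rightarrow> real^'n" and f :: "real^'n \<Rightarrow> 'c::topological_space"
  assumes stat: "stationary_from M z k0" and z: "\<And>k. z k \<in> borel_measurable M"
    and f: "f \<in> borel_measurable borel"
  shows "distr M borel (\<lambda>\<omega>. f (z (k0 + n) \<omega>)) = distr M borel (\<lambda>\<omega>. f (z k0 \<omega>))"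
proof -
  have paths: "(\<lambda>\<omega> i. z (k0 + m + i) \<omega>) \<in> measurable M (Pi\<^sub>M UNIV (\<lambda>_. borel))" for m
    by (rule measurable_PiM_single') (auto intro: z)
  have head: "(\<lambda>p. f (p 0)) \<in> borel_measurable (Pi\<^sub>M UNIV (\<lambda>_. borel))"
    using f by measurable
  have "distr M borel (\<lambda>\<omega>. f (z (k0 + m) \<omega>)) =
      distr (distr M (Pi\<^sub>M UNIV (\<lambda>_. borel)) (\<lambda>\<omega> i. z (k0 + m + i) \<omega>)) borel (\<lambda>p. f (p 0))" for m
    by (simp add: distr_distr[OF head paths] comp_def)
  from this[of n] this[of 0] stat show ?thesis
    by (simp add: stationary_from_def)
qed

lemma (in finite_measure) integrable_of_bounded_truncations:
  fixes g :: "'a \<Rightarrow> real"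
  assumes g[measurable]: "g \<in> borel_measurable M" and nonneg: "\<And>x. 0 \<le> g x"
    and bounded: "\<And>K. 0 \<le> K \<Longrightarrow> (\<integral>x. min (g x) K \<partial>M) \<le> B"
  shows "integrable M g"
proof (rule integrableI_nonneg)
  have truncations: "integrable M (\<lambda>x. min (g x) (real m))" for m :: nat
    by (rule integrable_const_bound[where B="real m"]) (auto simp: nonneg)
  have "ennreal (g x) = (SUP m. ennreal (min (g x) (real m)))" for x
  proof (rule antisym)
    obtain m :: nat where "g x \<le> real m" using real_arch_simple by blast
    then show "ennreal (g x) \<le> (SUP m. ennreal (min (g x) (real m)))"
      by (intro SUP_upper2[of m]) auto
  qed (auto intro!: SUP_least ennreal_leI)
  then have "(\<integral>\<^sup>+x. ennreal (g x) \<partial>M) = (\<integral>\<^sup>+x. (SUP m. ennreal (min (g x) (real m))) \<partial>M)"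
    by simp
  also have "\<dots> = (SUP m. \<integral>\<^sup>+x. ennreal (min (g x) (real m)) \<partial>M)"
    by (rule nn_integral_monotone_convergence_SUP)
      (auto simp: incseq_def le_fun_def intro!: ennreal_leI)
  also have "\<dots> = (SUP m. ennreal (\<integral>x. min (g x) (real m) \<partial>M))"
    using truncations by (simp add: nn_integral_eq_integral nonneg)
  also have "\<dots> \<le> ennreal B"
    using bounded by (intro SUP_least ennreal_leI) simp
  finally show "(\<integral>\<^sup>+x. ennreal (g x) \<partial>M) < \<infinity>"
    using le_less_trans by fastforce
qed (use nonneg in auto)

lemma min_square_sum_le:
  fixes b c K :: real
  shows "min ((b + c)\<^sup>2) K \<le> min K (2 * b\<^sup>2) + 2 * c\<^sup>2"
proof -
  have "(b + c)\<^sup>2 \<le> 2 * b\<^sup>2 + 2 * c\<^sup>2"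
    using sum_squares_bound[of b c] by (simp add: power2_sum)
  then have "min ((b + c)\<^sup>2) K \<le> K + 2 * c\<^sup>2" "min ((b + c)\<^sup>2) K \<le> 2 * b\<^sup>2 + 2 * c\<^sup>2"
    using zero_le_power2[of c] min.cobounded1[of "(b + c)\<^sup>2" K] min.cobounded2[of "(b + c)\<^sup>2" K]
    by linarith+
  then show ?thesis
    by (simp add: min_add_distrib_right)
qed

(* X None is the initial value Y 0 and X (Some k) the innovation of step k, so one independence
   hypothesis covers the innovations and the initial value together. *)
locale ar1_process = prob_space +
  fixes X :: "nat option \<Rightarrow> 'a \<Rightarrow> real" and Y :: "nat \<Rightarrow> 'a \<Rightarrow> real" and a s :: real
  assumes indep: "indep_vars (\<lambda>_. borel) X UNIV"
    and initial: "\<And>\<omega>. \<omega> \<in> space M \<Longrightarrow> Y 0 \<omega> = X None \<omega>"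
    and recursion: "\<And>k \<omega>. \<omega> \<in> space M \<Longrightarrow> Y (Suc k) \<omega> = a * Y k \<omega> + X (Some k) \<omega>"
    and innovation_square_integrable: "\<And>k. integrable M (\<lambda>\<omega>. (X (Some k) \<omega>)\<^sup>2)"
    and innovation_mean: "\<And>k. expectation (X (Some k)) = 0"
    and innovation_second_moment: "\<And>k. expectation (\<lambda>\<omega>. (X (Some k) \<omega>)\<^sup>2) = s"
    and contraction: "\<bar>a\<bar> < 1"
begin

lemma X_measurable [measurable]: "X i \<in> borel_measurable M"
  using indep by (auto simp: indep_vars_def)

lemma innovation_integrable: "integrable M (X (Some k))"
  by (rule square_integrable_imp_integrable) (simp_all add: innovation_square_integrable)

lemma innovation_second_moment_nonneg: "0 \<le> s"
  using innovation_second_moment[of 0] by (metis integral_nonneg_AE AE_I2 zero_le_power2)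

lemma square_coefficient_less_1: "a\<^sup>2 < 1"
  using contraction by (simp add: abs_square_less_1)

lemma stationary_variance_nonneg: "0 \<le> s / (1 - a\<^sup>2)"
  using innovation_second_moment_nonneg square_coefficient_less_1 by simp

definition innovation_sum :: "nat \<Rightarrow> nat \<Rightarrow> 'a \<Rightarrow> real" where
  "innovation_sum p n \<omega> = (\<Sum>i<n. a ^ (n - 1 - i) * X (Some (p + i)) \<omega>)"

lemma innovation_sum_0 [simp]: "innovation_sum p 0 \<omega> = 0"
  by (simp add: innovation_sum_def)

lemma innovation_sum_Suc:
  "innovation_sum p (Suc n) \<omega> = a * innovation_sum p n \<omega> + X (Some (p + n)) \<omega>"
proof -
  have "(\<Sum>i<n. a ^ (n - i) * X (Some (p + i)) \<omega>) = a * innovation_sum p n \<omega>"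
    unfolding innovation_sum_def sum_distrib_left
    by (intro sum.cong refl) (simp add: Suc_diff_Suc flip: power_Suc)
  then show ?thesis
    by (simp add: innovation_sum_def)
qed

lemma innovation_sum_measurable [measurable]: "innovation_sum p n \<in> borel_measurable M"
  unfolding innovation_sum_def[abs_def] by measurable

lemma Y_shift: "\<omega> \<in> space M \<Longrightarrow> Y (p + n) \<omega> = a ^ n * Y p \<omega> + innovation_sum p n \<omega>"
  by (induction n) (simp_all add: recursion innovation_sum_Suc algebra_simps)

lemma Y_closed_form: "\<omega> \<in> space M \<Longrightarrow> Y p \<omega> = a ^ p * X None \<omega> + innovation_sum 0 p \<omega>"
  using Y_shift[of \<omega> 0 p] initial by simp

lemma Y_measurable [measurable]: "Y p \<in> borel_measurable M"
  by (rule measurable_cong[THEN iffD2, OF Y_closed_form]) simp_all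

lemma innovation_sum_square_integrable: "integrable M (\<lambda>\<omega>. (innovation_sum p n \<omega>)\<^sup>2)"
  by (induction n)
    (simp_all add: innovation_sum_Suc integrable_square_add innovation_square_integrable)

lemma uncorrelated_innovation:
  assumes "p + n \<le> j" and "integrable M (\<lambda>\<omega>. c * X None \<omega> + innovation_sum p n \<omega>)"
  shows "expectation (\<lambda>\<omega>. (c * X None \<omega> + innovation_sum p n \<omega>) * X (Some j) \<omega>) = 0"
proof -
  define S where "S = insert None (Some ` {p..<p + n})"
  define F where "F t = c * t None + (\<Sum>i<n. a ^ (n - 1 - i) * t (Some (p + i)))"
    for t :: "nat option \<Rightarrow> real"
  have F_X: "F (\<lambda>i\<in>S. X i \<omega>) = c * X None \<omega> + innovation_sum p n \<omega>" for \<omega>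
    by (simp add: F_def S_def innovation_sum_def)
  have "F \<in> borel_measurable (Pi\<^sub>M S (\<lambda>_. borel))"
    unfolding F_def S_def by measurable
  moreover have "Some j \<notin> S"
    using assms(1) by (auto simp: S_def)
  ultimately have "expectation (\<lambda>\<omega>. F (\<lambda>i\<in>S. X i \<omega>) * X (Some j) \<omega>) =
      expectation (\<lambda>\<omega>. F (\<lambda>i\<in>S. X i \<omega>)) * expectation (X (Some j))"
    using assms(2) by (intro indep_vars_expectation_restrict_mult[OF indep])
      (unfold F_X, simp_all add: innovation_integrable)
  then show ?thesis
    by (simp add: F_X innovation_mean)
qed

lemma Y_uncorrelated_innovation:
  assumes "p \<le> j" and "integrable M (Y p)"
  shows "expectation (\<lambda>\<omega>. Y p \<omega> * X (Some j) \<omega>) = 0"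
proof -
  have "integrable M (\<lambda>\<omega>. a ^ p * X None \<omega> + innovation_sum 0 p \<omega>) = integrable M (Y p)"
    by (rule Bochner_Integration.integrable_cong) (simp_all add: Y_closed_form)
  then have "expectation (\<lambda>\<omega>. (a ^ p * X None \<omega> + innovation_sum 0 p \<omega>) * X (Some j) \<omega>) = 0"
    using assms by (intro uncorrelated_innovation) simp_all
  then show ?thesis
    by (simp add: Y_closed_form cong: Bochner_Integration.integral_cong)
qed

lemma second_moment_step:
  assumes [measurable]: "U \<in> borel_measurable M" and U: "integrable M (\<lambda>\<omega>. (U \<omega>)\<^sup>2)"
    and uncorrelated: "expectation (\<lambda>\<omega>. U \<omega> * X (Some j) \<omega>) = 0"
  shows "integrable M (\<lambda>\<omega>. (c * U \<omega> + X (Some j) \<omega>)\<^sup>2)"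
    and "expectation (\<lambda>\<omega>. (c * U \<omega> + X (Some j) \<omega>)\<^sup>2) = c\<^sup>2 * expectation (\<lambda>\<omega>. (U \<omega>)\<^sup>2) + s"
proof -
  show "integrable M (\<lambda>\<omega>. (c * U \<omega> + X (Some j) \<omega>)\<^sup>2)"
    by (rule integrable_square_add) (simp_all add: U innovation_square_integrable)
  have "integrable M (\<lambda>\<omega>. U \<omega> * X (Some j) \<omega>)"
    by (rule integrable_mult_of_square_integrable) (simp_all add: U innovation_square_integrable)
  moreover have "(\<lambda>\<omega>. (c * U \<omega> + X (Some j) \<omega>)\<^sup>2) =
      (\<lambda>\<omega>. c\<^sup>2 * (U \<omega>)\<^sup>2 + (2 * c) * (U \<omega> * X (Some j) \<omega>) + (X (Some j) \<omega>)\<^sup>2)"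
    by (simp add: fun_eq_iff power2_eq_square algebra_simps)
  ultimately show "expectation (\<lambda>\<omega>. (c * U \<omega> + X (Some j) \<omega>)\<^sup>2) = c\<^sup>2 * expectation (\<lambda>\<omega>. (U \<omega>)\<^sup>2) + s"
    using U innovation_square_integrable[of j] uncorrelated innovation_second_moment[of j] by simp
qed

lemma innovation_sum_second_moment_le:
  "expectation (\<lambda>\<omega>. (innovation_sum p n \<omega>)\<^sup>2) \<le> s / (1 - a\<^sup>2)"
proof (induction n)
  case 0
  show ?case
    using stationary_variance_nonneg by simp
next
  case (Suc n)
  have "integrable M (innovation_sum p n)"
    by (rule square_integrable_imp_integrable) (simp_all add: innovation_sum_square_integrable)
  then have "expectation (\<lambda>\<omega>. innovation_sum p n \<omega> * X (Some (p + n)) \<omega>) = 0"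
    using uncorrelated_innovation[of p n "p + n" 0] by simp
  then have "expectation (\<lambda>\<omega>. (innovation_sum p (Suc n) \<omega>)\<^sup>2) =
      a\<^sup>2 * expectation (\<lambda>\<omega>. (innovation_sum p n \<omega>)\<^sup>2) + s"
    unfolding innovation_sum_Suc
    by (rule second_moment_step(2)[OF innovation_sum_measurable innovation_sum_square_integrable])
  also have "\<dots> \<le> a\<^sup>2 * (s / (1 - a\<^sup>2)) + s"
    using mult_left_mono[OF Suc.IH, of "a\<^sup>2"] by simp
  also have "\<dots> = s / (1 - a\<^sup>2)"
    using square_coefficient_less_1 by (simp add: field_simps)
  finally show ?case .
qed

end

locale stationary_ar1_process = ar1_process +
  fixes k0 :: nat
  assumes stationary: "\<And>n. distr M borel (Y (k0 + n)) = distr M borel (Y k0)"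
begin

lemma stationary_expectation:
  fixes h :: "real \<Rightarrow> real"
  assumes "h \<in> borel_measurable borel"
  shows "expectation (\<lambda>\<omega>. h (Y (k0 + n) \<omega>)) = expectation (\<lambda>\<omega>. h (Y k0 \<omega>))"
  using integral_distr[OF Y_measurable assms, of "k0 + n"] integral_distr[OF Y_measurable assms, of k0]
  by (simp add: stationary)

(* Finiteness of E (Y k0)^2 is not assumed: stationarity moves the truncated moment to time k0 + n,
   where the initial value only enters damped by a^n. *)
lemma truncated_second_moment_le_damped:
  assumes K: "0 \<le> K"
  shows "expectation (\<lambda>\<omega>. min ((Y k0 \<omega>)\<^sup>2) K) \<le>
    expectation (\<lambda>\<omega>. min K (2 * (a ^ n)\<^sup>2 * (Y k0 \<omega>)\<^sup>2)) + 2 * (s / (1 - a\<^sup>2))"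
proof -
  have damped_integrable: "integrable M (\<lambda>\<omega>. min K (2 * (a ^ n)\<^sup>2 * (Y k0 \<omega>)\<^sup>2))"
    using K by (intro integrable_const_bound[where B=K]) auto
  have "expectation (\<lambda>\<omega>. min ((Y k0 \<omega>)\<^sup>2) K) = expectation (\<lambda>\<omega>. min ((Y (k0 + n) \<omega>)\<^sup>2) K)"
    by (rule stationary_expectation[symmetric]) measurable
  also have "\<dots> \<le> expectation (\<lambda>\<omega>. min K (2 * (a ^ n)\<^sup>2 * (Y k0 \<omega>)\<^sup>2) + 2 * (innovation_sum k0 n \<omega>)\<^sup>2)"
  proof (rule integral_mono)
    show "integrable M (\<lambda>\<omega>. min ((Y (k0 + n) \<omega>)\<^sup>2) K)"
      by (rule integrable_const_bound[where B=K]) (use K in auto)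
    show "integrable M (\<lambda>\<omega>. min K (2 * (a ^ n)\<^sup>2 * (Y k0 \<omega>)\<^sup>2) + 2 * (innovation_sum k0 n \<omega>)\<^sup>2)"
      using damped_integrable innovation_sum_square_integrable by simp
    show "min ((Y (k0 + n) \<omega>)\<^sup>2) K \<le> min K (2 * (a ^ n)\<^sup>2 * (Y k0 \<omega>)\<^sup>2) + 2 * (innovation_sum k0 n \<omega>)\<^sup>2"
      if "\<omega> \<in> space M" for \<omega>
      using min_square_sum_le[of "a ^ n * Y k0 \<omega>" "innovation_sum k0 n \<omega>" K]
      by (simp add: Y_shift[OF that] power_mult_distrib)
  qed
  also have "\<dots> = expectation (\<lambda>\<omega>. min K (2 * (a ^ n)\<^sup>2 * (Y k0 \<omega>)\<^sup>2)) +
      2 * expectation (\<lambda>\<omega>. (innovation_sum k0 n \<omega>)\<^sup>2)"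
    using damped_integrable innovation_sum_square_integrable by simp
  also have "\<dots> \<le> expectation (\<lambda>\<omega>. min K (2 * (a ^ n)\<^sup>2 * (Y k0 \<omega>)\<^sup>2)) + 2 * (s / (1 - a\<^sup>2))"
    using innovation_sum_second_moment_le[of k0 n] by linarith
  finally show ?thesis .
qed

lemma truncated_second_moment_le:
  assumes K: "0 \<le> K"
  shows "expectation (\<lambda>\<omega>. min ((Y k0 \<omega>)\<^sup>2) K) \<le> 2 * (s / (1 - a\<^sup>2))"
proof -
  define r where "r n \<omega> = min K (2 * (a ^ n)\<^sup>2 * (Y k0 \<omega>)\<^sup>2)" for n \<omega>
  have r_measurable [measurable]: "r n \<in> borel_measurable M" for n
    unfolding r_def[abs_def] by measurable
  have "(\<lambda>n. (a\<^sup>2) ^ n) \<longlonglongrightarrow> 0"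
    using square_coefficient_less_1 by (intro LIMSEQ_power_zero) simp
  then have "(\<lambda>n. r n \<omega>) \<longlonglongrightarrow> min K (2 * 0 * (Y k0 \<omega>)\<^sup>2)" for \<omega>
    unfolding r_def by (intro tendsto_intros) (simp_all add: power_mult[symmetric] power_mult_distrib mult.commute)
  then have "(\<lambda>n. expectation (r n)) \<longlonglongrightarrow> expectation (\<lambda>_. 0)"
    using K by (intro integral_dominated_convergence[where w="\<lambda>_. K"]) (simp_all add: r_def)
  then have "(\<lambda>n. expectation (r n) + 2 * (s / (1 - a\<^sup>2))) \<longlonglongrightarrow> 2 * (s / (1 - a\<^sup>2))"
    using tendsto_add[OF _ tendsto_const] by fastforce
  then show ?thesis
    by (rule LIMSEQ_le_const) (use truncated_second_moment_le_damped[OF K] in \<open>auto simp: r_def[abs_def]\<close>)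
qed

lemma square_integrable: "k0 \<le> p \<Longrightarrow> integrable M (\<lambda>\<omega>. (Y p \<omega>)\<^sup>2)"
proof -
  assume "k0 \<le> p"
  then obtain n where p: "p = k0 + n"
    using le_Suc_ex by blast
  have Y0: "integrable M (\<lambda>\<omega>. (Y k0 \<omega>)\<^sup>2)"
    by (rule integrable_of_bounded_truncations[OF _ _ truncated_second_moment_le]) simp_all
  have "integrable M (\<lambda>\<omega>. (a ^ n * Y k0 \<omega> + innovation_sum k0 n \<omega>)\<^sup>2)"
    by (rule integrable_square_add) (simp_all add: Y0 innovation_sum_square_integrable)
  then show ?thesis
    unfolding p by (rule Bochner_Integration.integrable_cong[THEN iffD1, rotated 2])
      (simp_all add: Y_shift)
qed

lemma Y_integrable: "k0 \<le> p \<Longrightarrow> integrable M (Y p)"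
  by (rule square_integrable_imp_integrable) (simp_all add: square_integrable)

lemma second_moment: "k0 \<le> p \<Longrightarrow> expectation (\<lambda>\<omega>. (Y p \<omega>)\<^sup>2) = s / (1 - a\<^sup>2)"
proof -
  have "expectation (\<lambda>\<omega>. (Y k0 \<omega>)\<^sup>2) = expectation (\<lambda>\<omega>. (Y (k0 + 1) \<omega>)\<^sup>2)"
    by (rule stationary_expectation[symmetric]) measurable
  also have "\<dots> = expectation (\<lambda>\<omega>. (a * Y k0 \<omega> + X (Some k0) \<omega>)\<^sup>2)"
    by (rule Bochner_Integration.integral_cong) (simp_all add: recursion)
  also have "\<dots> = a\<^sup>2 * expectation (\<lambda>\<omega>. (Y k0 \<omega>)\<^sup>2) + s"
    using square_integrable[of k0] Y_integrable[of k0]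
    by (intro second_moment_step(2) Y_uncorrelated_innovation) simp_all
  finally have "expectation (\<lambda>\<omega>. (Y k0 \<omega>)\<^sup>2) = s / (1 - a\<^sup>2)"
    using square_coefficient_less_1 by (simp add: field_simps)
  moreover assume "k0 \<le> p"
  then obtain n where "p = k0 + n"
    using le_Suc_ex by blast
  ultimately show ?thesis
    using stationary_expectation[of "\<lambda>x. x\<^sup>2" n] by simp
qed

lemma product_integrable:
  "k0 \<le> p \<Longrightarrow> k0 \<le> q \<Longrightarrow> integrable M (\<lambda>\<omega>. Y p \<omega> * Y q \<omega>)"
  by (intro integrable_mult_of_square_integrable square_integrable) simp_all

lemma covariance:
  assumes "k0 \<le> p"
  shows "expectation (\<lambda>\<omega>. Y p \<omega> * Y (p + m) \<omega>) = s / (1 - a\<^sup>2) * a ^ m"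
proof (induction m)
  case 0
  show ?case
    using second_moment[OF assms] by (simp add: power2_eq_square)
next
  case (Suc m)
  have uncorrelated: "integrable M (\<lambda>\<omega>. Y p \<omega> * X (Some (p + m)) \<omega>)"
    "expectation (\<lambda>\<omega>. Y p \<omega> * X (Some (p + m)) \<omega>) = 0"
    using square_integrable[OF assms] Y_integrable[OF assms]
    by (auto intro!: integrable_mult_of_square_integrable Y_uncorrelated_innovation
        innovation_square_integrable)
  have "expectation (\<lambda>\<omega>. Y p \<omega> * Y (p + Suc m) \<omega>) =
      expectation (\<lambda>\<omega>. a * (Y p \<omega> * Y (p + m) \<omega>) + Y p \<omega> * X (Some (p + m)) \<omega>)"
    by (rule Bochner_Integration.integral_cong) (simp_all add: recursion algebra_simps)
  also have "\<dots> = a * expectation (\<lambda>\<omega>. Y p \<omega> * Y (p + m) \<omega>)"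
    using product_integrable[OF assms, of "p + m"] assms uncorrelated by simp
  finally show ?case
    by (simp add: Suc.IH)
qed

lemma checkpoint_average_second_moment:
  shows "integrable M (\<lambda>\<omega>. ((1 / real N) * (\<Sum>m<N. Y (k0 + m * T) \<omega>))\<^sup>2)"
    and "expectation (\<lambda>\<omega>. ((1 / real N) * (\<Sum>m<N. Y (k0 + m * T) \<omega>))\<^sup>2) =
      s / (1 - a\<^sup>2) * (1 / (real N)\<^sup>2) * (real N + 2 * (\<Sum>r = 1..N-1. real (N - r) * a ^ (r * T)))"
proof -
  have power_rT: "(a ^ T) ^ r = a ^ (r * T)" for r
    by (simp add: power_mult mult.commute)
  have integrable: "integrable M (\<lambda>\<omega>. Y (k0 + m * T) \<omega> * Y (k0 + m' * T) \<omega>)" for m m'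
    by (rule product_integrable) simp_all
  have "expectation (\<lambda>\<omega>. Y (k0 + m * T) \<omega> * Y (k0 + m' * T) \<omega>) = s / (1 - a\<^sup>2) * (a ^ T) ^ (m' - m)"
    if "m \<le> m'" for m m'
  proof -
    have "k0 + m' * T = (k0 + m * T) + (m' - m) * T"
      using that by (simp add: add_mult_distrib[symmetric])
    then show ?thesis
      unfolding power_rT by (simp only:) (rule covariance, simp)
  qed
  from expectation_average_square[OF integrable this]
  show "integrable M (\<lambda>\<omega>. ((1 / real N) * (\<Sum>m<N. Y (k0 + m * T) \<omega>))\<^sup>2)"
    and "expectation (\<lambda>\<omega>. ((1 / real N) * (\<Sum>m<N. Y (k0 + m * T) \<omega>))\<^sup>2) =
      s / (1 - a\<^sup>2) * (1 / (real N)\<^sup>2) * (real N + 2 * (\<Sum>r = 1..N-1. real (N - r) * a ^ (r * T)))"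
    by (simp_all add: power_rT)
qed

end

lemma centred_gaussian_vector_inner:
  assumes "centred_gaussian_vector M X C" and "a \<bullet> (C *v a) = \<tau>\<^sup>2" and "0 < \<tau>"
  shows "distributed M lborel (\<lambda>\<omega>. a \<bullet> X \<omega>) (normal_density 0 \<tau>)"
  using assms unfolding centred_gaussian_vector_def by (metis power_not_zero less_irrefl real_sqrt_abs abs_of_pos)

lemma stable_step_size:
  fixes \<eta> lam LS :: real
  assumes "0 < lam" "lam \<le> LS" "0 < \<eta>" "\<eta> < 2 / LS"
  shows "\<bar>1 - \<eta> * lam\<bar> < 1" and "0 < 2 * lam - \<eta> * lam\<^sup>2"
proof -
  have "\<eta> * lam \<le> \<eta> * LS" using assms by simp
  also have "\<dots> < 2" using assms by (simp add: field_simps)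
  finally have "\<eta> * lam < 2" .
  then show "\<bar>1 - \<eta> * lam\<bar> < 1" using assms by (simp add: abs_less_iff)
  have "0 < lam * (2 - \<eta> * lam)" using \<open>\<eta> * lam < 2\<close> assms by simp
  then show "0 < 2 * lam - \<eta> * lam\<^sup>2" by (simp add: power2_eq_square algebra_simps)
qed

locale river_valley_sgd = prob_space M for M :: "'a measure" +
  fixes v wstar :: "real^'n" and gradL :: "real^'n \<Rightarrow> real^'n" and \<eta> \<mu>F \<sigma> :: real
    and k0 :: nat and w g :: "nat \<Rightarrow> 'a \<Rightarrow> real^'n"
  assumes w_rv [measurable]: "\<And>k. w k \<in> borel_measurable M"
    and noise_gauss: "\<And>k. centred_gaussian_vector M (g k) (\<sigma>\<^sup>2 *\<^sub>R projS v)"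
    and noise_indep: "indep_vars (\<lambda>_. borel) (\<lambda>i. case i of None \<Rightarrow> w 0 | Some k \<Rightarrow> g k) UNIV"
    and iter: "\<And>k \<omega>. \<omega> \<in> space M \<Longrightarrow>
                 w (Suc k) \<omega> = w k \<omega> - \<eta> *\<^sub>R gradL (w k \<omega>) - (\<eta> * \<mu>F) *\<^sub>R v + \<eta> *\<^sub>R g k \<omega>"
    and stat: "stationary_from M (\<lambda>k \<omega>. projS v *v (w k \<omega> - wstar)) k0"
    and step_pos: "0 < \<eta>" and noise_pos: "0 < \<sigma>"
begin

lemma eigen_coordinate_stationary_ar1:
  assumes gradient: "\<And>x. gradL x \<bullet> u = lam * (u \<bullet> (x - wstar))"
    and u_unit: "u \<bullet> u = 1" and u_orth: "u \<bullet> v = 0" and contraction: "\<bar>1 - \<eta> * lam\<bar> < 1"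
  shows "stationary_ar1_process M
           (\<lambda>i \<omega>. case i of None \<Rightarrow> u \<bullet> (w 0 \<omega> - wstar) | Some k \<Rightarrow> \<eta> * (u \<bullet> g k \<omega>))
           (\<lambda>k \<omega>. u \<bullet> (w k \<omega> - wstar)) (1 - \<eta> * lam) ((\<eta> * \<sigma>)\<^sup>2) k0"
proof -
  have noise: "distributed M lborel (\<lambda>\<omega>. u \<bullet> g k \<omega>) (normal_density 0 \<sigma>)" for k
    using u_unit u_orth noise_pos
    by (intro centred_gaussian_vector_inner[OF noise_gauss])
      (simp_all add: scaleR_matrix_vector_assoc[symmetric] projS_apply inner_diff_right inner_commute)
  note noise_moments = normal_distributed_moments[OF noise_pos noise]
  define coordinate where
    "coordinate i x = (case i of None \<Rightarrow> u \<bullet> (x - wstar) | Some k \<Rightarrow> \<eta> * (u \<bullet> x))"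
    for i :: "nat option" and x
  have "indep_vars (\<lambda>_. borel)
      (\<lambda>i \<omega>. coordinate i ((case i of None \<Rightarrow> w 0 | Some k \<Rightarrow> g k) \<omega>)) (UNIV :: nat option set)"
  proof (rule indep_vars_compose2[OF noise_indep])
    show "coordinate i \<in> borel_measurable borel" for i
      unfolding coordinate_def[abs_def] by (cases i) simp_all
  qed
  moreover have "(\<lambda>i \<omega>. coordinate i ((case i of None \<Rightarrow> w 0 | Some k \<Rightarrow> g k) \<omega>)) =
      (\<lambda>i \<omega>. case i of None \<Rightarrow> u \<bullet> (w 0 \<omega> - wstar) | Some k \<Rightarrow> \<eta> * (u \<bullet> g k \<omega>))"
    by (simp add: fun_eq_iff coordinate_def split: option.split)
  moreover have "u \<bullet> (w (Suc k) \<omega> - wstar) = (1 - \<eta> * lam) * (u \<bullet> (w k \<omega> - wstar)) + \<eta> * (u \<bullet> g k \<omega>)"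
    if "\<omega> \<in> space M" for k \<omega>
  proof -
    have "u \<bullet> (w (Suc k) \<omega> - wstar) = u \<bullet> (w k \<omega> - wstar) - \<eta> * (gradL (w k \<omega>) \<bullet> u)
        - \<eta> * \<mu>F * (u \<bullet> v) + \<eta> * (u \<bullet> g k \<omega>)"
      by (simp add: iter[OF that] inner_diff_right inner_add_right inner_commute algebra_simps)
    then show ?thesis
      using u_orth by (simp add: gradient algebra_simps)
  qed
  moreover have "distr M borel (\<lambda>\<omega>. u \<bullet> (w (k0 + n) \<omega> - wstar)) = distr M borel (\<lambda>\<omega>. u \<bullet> (w k0 \<omega> - wstar))"
    for n
  proof -
    have "u \<bullet> (projS v *v x) = u \<bullet> x" for x
      using u_orth by (simp add: projS_apply inner_diff_right)
    moreover have "(\<lambda>\<omega>. projS v *v (w k \<omega> - wstar)) \<in> borel_measurable M" for k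
      by (simp add: projS_apply)
    ultimately show ?thesis
      using stationary_from_distr_eq[OF stat, of "\<lambda>x. u \<bullet> x" n] by simp
  qed
  ultimately show ?thesis
    using contraction noise_moments
    by unfold_locales (simp_all add: power_mult_distrib)
qed

lemma eigen_coordinate_checkpoint_average:
  assumes gradient: "\<And>x. gradL x \<bullet> u = lam * (u \<bullet> (x - wstar))"
    and u: "u \<bullet> u = 1" "u \<bullet> v = 0" and contraction: "\<bar>1 - \<eta> * lam\<bar> < 1"
  shows "integrable M (\<lambda>\<omega>. ((1 / real N) * (\<Sum>m<N. u \<bullet> (w (k0 + m * T) \<omega> - wstar)))\<^sup>2)"
    and "expectation (\<lambda>\<omega>. ((1 / real N) * (\<Sum>m<N. u \<bullet> (w (k0 + m * T) \<omega> - wstar)))\<^sup>2) =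
      \<eta> * \<sigma>\<^sup>2 / (2 * lam - \<eta> * lam\<^sup>2) * (1 / (real N)\<^sup>2) *
        (real N + 2 * (\<Sum>r = 1..N-1. real (N - r) * (1 - \<eta> * lam) ^ (r * T)))"
proof -
  interpret stationary_ar1_process M
    "\<lambda>i \<omega>. case i of None \<Rightarrow> u \<bullet> (w 0 \<omega> - wstar) | Some k \<Rightarrow> \<eta> * (u \<bullet> g k \<omega>)"
    "\<lambda>k \<omega>. u \<bullet> (w k \<omega> - wstar)" "1 - \<eta> * lam" "(\<eta> * \<sigma>)\<^sup>2" k0
    by (rule eigen_coordinate_stationary_ar1[OF gradient u contraction])
  have "1 - (1 - \<eta> * lam)\<^sup>2 = \<eta> * (2 * lam - \<eta> * lam\<^sup>2)"
    by (simp add: power2_eq_square algebra_simps)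
  then have "(\<eta> * \<sigma>)\<^sup>2 / (1 - (1 - \<eta> * lam)\<^sup>2) = \<eta> * \<sigma>\<^sup>2 / (2 * lam - \<eta> * lam\<^sup>2)"
    using step_pos by (simp add: power_mult_distrib power2_eq_square[of \<eta>] mult.assoc)
  then show "integrable M (\<lambda>\<omega>. ((1 / real N) * (\<Sum>m<N. u \<bullet> (w (k0 + m * T) \<omega> - wstar)))\<^sup>2)"
    and "expectation (\<lambda>\<omega>. ((1 / real N) * (\<Sum>m<N. u \<bullet> (w (k0 + m * T) \<omega> - wstar)))\<^sup>2) =
      \<eta> * \<sigma>\<^sup>2 / (2 * lam - \<eta> * lam\<^sup>2) * (1 / (real N)\<^sup>2) *
        (real N + 2 * (\<Sum>r = 1..N-1. real (N - r) * (1 - \<eta> * lam) ^ (r * T)))"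
    using checkpoint_average_second_moment[of N T] by simp_all
qed

end

theorem theorem1:
  fixes M :: "'a measure"
    and v wstar :: "real^'n"
    and H :: "real^'n^'n"
    and l l' l'' :: "real \<Rightarrow> real"
    and gradL :: "real^'n \<Rightarrow> real^'n"
    and lam :: "nat \<Rightarrow> real"
    and u :: "nat \<Rightarrow> real^'n"
    and \<mu> LS \<eta> \<mu>F \<sigma> :: real
    and T N k0 :: nat
    and w g :: "nat \<Rightarrow> 'a \<Rightarrow> real^'n"
  assumes dim: "CARD('n) \<ge> 2"
    and v_unit: "norm v = 1"
    and l_C2: "\<And>x. (l has_real_derivative l' x) (at x)"
              "\<And>x. (l' has_real_derivative l'' x) (at x)"
              "continuous_on UNIV l''"
    and H_psd: "psd H"
    and H_PF: "H ** projF v = 0"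
    and H_PS: "H ** projS v = H" "projS v ** H = H"
    and eig: "\<And>i j. i \<in> {1..CARD('n)-1} \<Longrightarrow> j \<in> {1..CARD('n)-1} \<Longrightarrow>
                 u i \<bullet> u j = (if i = j then 1 else 0)"
             "\<And>j. j \<in> {1..CARD('n)-1} \<Longrightarrow> u j \<bullet> v = 0"
             "\<And>j. j \<in> {1..CARD('n)-1} \<Longrightarrow> H *v u j = lam j *\<^sub>R u j"
    and eig_range: "\<And>j. j \<in> {1..CARD('n)-1} \<Longrightarrow> \<mu> \<le> lam j \<and> lam j \<le> LS"
    and mu_pos: "0 < \<mu>" and mu_LS: "\<mu> \<le> LS"
    and eta: "0 < \<eta>" "\<eta> < 2 / LS"
    and muF: "0 < \<mu>F" and sigma: "0 < \<sigma>"
    and grad: "\<And>x. (river_loss l v wstar H has_derivative (\<lambda>h. gradL x \<bullet> h)) (at x)"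
    and M: "prob_space M"
    and w_rv: "\<And>k. w k \<in> borel_measurable M"
    and noise_gauss: "\<And>k. centred_gaussian_vector M (g k) (\<sigma>\<^sup>2 *\<^sub>R projS v)"
    and noise_indep: "prob_space.indep_vars M (\<lambda>_. borel)
                        (\<lambda>i. case i of None \<Rightarrow> w 0 | Some k \<Rightarrow> g k) UNIV"
    and iter: "\<And>k \<omega>. \<omega> \<in> space M \<Longrightarrow>
                 w (Suc k) \<omega> = w k \<omega> - \<eta> *\<^sub>R gradL (w k \<omega>) - (\<eta> * \<mu>F) *\<^sub>R v + \<eta> *\<^sub>R g k \<omega>"
    and T: "T \<ge> 1" and N: "N \<ge> 1"
    and stat: "stationary_from M (\<lambda>k \<omega>. projS v *v (w k \<omega> - wstar)) k0"
  shows "(let wbar = (\<lambda>\<omega>. (1 / real N) *\<^sub>R (\<Sum>m<N. w (k0 + m * T) \<omega>));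
              D = (\<lambda>x. norm (projS v *v (x - wstar)));
              ED = integral\<^sup>L M (\<lambda>\<omega>. (D (wbar \<omega>))\<^sup>2)
          in ED = (\<Sum>j = 1..CARD('n)-1.
                     (\<eta> * \<sigma>\<^sup>2 / (2 * lam j - \<eta> * (lam j)\<^sup>2)) * (1 / (real N)\<^sup>2) *
                     (real N + 2 * (\<Sum>r = 1..N-1. real (N - r) * (1 - \<eta> * lam j) ^ (r * T))))
           \<and> (\<forall>\<epsilon>. 0 \<le> \<epsilon> \<and> \<epsilon> < 1 \<and> (\<forall>j \<in> {1..CARD('n)-1}. \<bar>1 - \<eta> * lam j\<bar> ^ T \<le> \<epsilon>) \<longrightarrow>
                 ED \<le> (1 / real N) * (1 + 2 * \<epsilon> / (1 - \<epsilon>)) *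
                       (\<Sum>j = 1..CARD('n)-1. \<eta> * \<sigma>\<^sup>2 / (2 * lam j - \<eta> * (lam j)\<^sup>2))))"
proof -
  interpret river_frame v u
    by unfold_locales (use v_unit eig in auto)
  interpret river_valley_sgd M v wstar gradL \<eta> \<mu>F \<sigma> k0 w g
    by (intro river_valley_sgd.intro river_valley_sgd_axioms.intro M w_rv noise_gauss iter stat eta(1) sigma)
      (use noise_indep in auto)
  define V where "V j = \<eta> * \<sigma>\<^sup>2 / (2 * lam j - \<eta> * (lam j)\<^sup>2)" for j
  have lam: "0 < lam j" "\<bar>1 - \<eta> * lam j\<bar> < 1" "0 < 2 * lam j - \<eta> * (lam j)\<^sup>2"
    if "j \<in> {1..CARD('n)-1}" for j
    using eig_range[OF that] mu_pos stable_step_size[of "lam j" LS \<eta>] eta by auto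
  have "H *v v = 0"
    using arg_cong[OF H_PF, of "\<lambda>A. A *v v"] v_unit
    by (simp add: matrix_vector_mul_assoc[symmetric] projF_apply norm_eq_1)
  then have sqrtH: "psd (msqrt H)" "msqrt H ** msqrt H = H"
    using msqrt_props[OF _ eig(3)] lam by (auto simp: less_imp_le)
  have average: "integrable M (\<lambda>\<omega>. ((1 / real N) * (\<Sum>m<N. u j \<bullet> (w (k0 + m * T) \<omega> - wstar)))\<^sup>2) \<and>
      expectation (\<lambda>\<omega>. ((1 / real N) * (\<Sum>m<N. u j \<bullet> (w (k0 + m * T) \<omega> - wstar)))\<^sup>2) =
        V j * (1 / (real N)\<^sup>2) * (real N + 2 * (\<Sum>r = 1..N-1. real (N - r) * (1 - \<eta> * lam j) ^ (r * T)))"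
    if j: "j \<in> {1..CARD('n)-1}" for j
  proof -
    have "gradL x \<bullet> u j = lam j * (u j \<bullet> (x - wstar))" for x
      by (rule river_loss_gradient_eigenvector[OF grad sqrtH eig(2,3)[OF j]])
    from eigen_coordinate_checkpoint_average[where N=N and T=T,
        OF this eig(1)[OF j j, simplified] eig(2)[OF j] lam(2)[OF j]]
    show ?thesis by (simp add: V_def)
  qed
  have ED: "expectation (\<lambda>\<omega>. (norm (projS v *v ((1 / real N) *\<^sub>R (\<Sum>m<N. w (k0 + m * T) \<omega>) - wstar)))\<^sup>2) =
      (\<Sum>j = 1..CARD('n)-1. V j * (1 / (real N)\<^sup>2) *
        (real N + 2 * (\<Sum>r = 1..N-1. real (N - r) * (1 - \<eta> * lam j) ^ (r * T))))"
    using N average by (simp add: norm_projS_average Bochner_Integration.integral_sum)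
  have "0 \<le> V j" if "j \<in> {1..CARD('n)-1}" for j
    using lam[OF that] eta by (simp add: V_def)
  then show ?thesis
    unfolding Let_def V_def[symmetric] ED
    using merged_variance_le[where J="{1..CARD('n)-1}" and V=V and c="\<lambda>j. 1 - \<eta> * lam j"] N
    by blast
qed

end
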